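(* For every integer $n\ge 1$, with $\omega_n:=\max\{r: c_r(n)\neq 0\}$ the clique number of $G_n$, \[ \chi(K_n)=\sum_{r=1}^{\omega_n}(-1)^{r-1}c_r(n)=\chi(N_n). \]
   Context: $G_n$ is the partition graph on the set of integer partitions of $n$: two partitions are adjacent if one is obtained from the other by decreasing one part by $1$ and increasing another part (possibly a part equal to $0$) by $1$, followed by reordering, with the result different from the original. $K_n=\operatorname{Cl}(G_n)$ is its clique complex, and $c_r(n)$ is the number of $r$-vertex cliques of $G_n$. For $\lambda=(\lambda_1\ge\lambda_2\ge\cdots)\vdash n$ of length $\ell$, a removable corner is a row $i$ with $\lambda_i>\lambda_{i+1}$, and an addable corner is a row $j\le\ell+1$ with $j=1$ or $\lambda_{j-1}>\lambda_j$. For a removable corner $c=i$ and addable corner $a=j$, $i\ne j$, $\lambda(c\to a)$ is obtained by decreasing $\lambda_i$ by $1$, increasing $\lambda_j$ by $1$, and reordering; the transfer is admissible if $\lambda(c\to a)\ne\lambda$. With $A_{\max}(\lambda,c)=\{a:\lambda(c\to a)\text{ admissible}\}$ and $C_{\max}(\lambda,a)=\{c:\lambda(c\to a)\text{ admissible}\}$, the full star-simplex is $\Sigma^{\star}_{\max}(\lambda,c)=\{\lambda\}\cup\{\lambda(c\to a):a\in A_{\max}(\lambda,c)\}$ and the full top-simplex is $\Sigma^{\top}_{\max}(\lambda,a)=\{\lambda\}\cup\{\lambda(c\to a):c\in C_{\max}(\lambda,a)\}$. $C_n$ is the family of all distinct full star- and full top-simplices (each regarded as a full simplex subcomplex of $K_n$),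 and $N_n$ is its nerve: the simplicial complex on vertex set $C_n$ whose simplices are nonempty subfamilies with nonempty common intersection. *)

theory Defs
  imports Main
begin

definition partitions :: "nat \<Rightarrow> nat list set" where
  "partitions n = {xs. sorted_wrt (\<ge>) xs \<and> (\<forall>x\<in>set xs. 0 < x) \<and> sum_list xs = n}"

text \<open>Part lambda_i (1-based), with lambda_i = 0 for i beyond the length.\<close>
definition part :: "nat list \<Rightarrow> nat \<Rightarrow> nat" where
  "part lam i = (if 1 \<le> i \<and> i \<le> length lam then lam ! (i - 1) else 0)"

definition move :: "nat list \<Rightarrow> nat \<Rightarrow> nat \<Rightarrow> nat list" where
  "move lam i j =
     rev (sort (filter (\<lambda>x. 0 < x)
       (map (\<lambda>k. part lam k + (if k = j then 1 else 0) - (if k = i then 1 else 0))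
            [1..<length lam + 2])))"

definition pmove :: "nat list \<Rightarrow> nat list \<Rightarrow> bool" where
  "pmove mu nu \<longleftrightarrow> (\<exists>i j. i \<noteq> j \<and> 1 \<le> i \<and> i \<le> length mu \<and> 1 \<le> j \<and> j \<le> length mu + 1
                       \<and> move mu i j = nu \<and> nu \<noteq> mu)"

definition padj :: "nat list \<Rightarrow> nat list \<Rightarrow> bool" where
  "padj mu nu \<longleftrightarrow> pmove mu nu \<or> pmove nu mu"

definition euler_char :: "'a set set \<Rightarrow> int" where
  "euler_char K = (\<Sum>\<sigma>\<in>K. (-1) ^ (card \<sigma> - 1))"

definition clique_complex :: "nat \<Rightarrow> nat list set set" where
  "clique_complex n = {\<sigma>. \<sigma> \<noteq> {} \<and> finite \<sigma> \<and> \<sigma> \<subseteq> partitions n \<and>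
      (\<forall>x\<in>\<sigma>. \<forall>y\<in>\<sigma>. x \<noteq> y \<longrightarrow> padj x y)}"

definition clique_count :: "nat \<Rightarrow> nat \<Rightarrow> nat" where
  "clique_count r n = card {\<sigma>. \<sigma> \<in> clique_complex n \<and> card \<sigma> = r}"

definition clique_number :: "nat \<Rightarrow> nat" where
  "clique_number n = Max {r. clique_count r n \<noteq> 0}"

definition removable :: "nat list \<Rightarrow> nat \<Rightarrow> bool" where
  "removable lam i \<longleftrightarrow> 1 \<le> i \<and> i \<le> length lam \<and> part lam i > part lam (i + 1)"

definition addable :: "nat list \<Rightarrow> nat \<Rightarrow> bool" where
  "addable lam j \<longleftrightarrow> 1 \<le> j \<and> j \<le> length lam + 1 \<and> (j = 1 \<or> part lam (j - 1) > part lam j)"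

definition admissible :: "nat list \<Rightarrow> nat \<Rightarrow> nat \<Rightarrow> bool" where
  "admissible lam c a \<longleftrightarrow> removable lam c \<and> addable lam a \<and> c \<noteq> a \<and> move lam c a \<noteq> lam"

definition star_simplex :: "nat list \<Rightarrow> nat \<Rightarrow> nat list set" where
  "star_simplex lam c = {lam} \<union> {move lam c a | a. admissible lam c a}"

definition top_simplex :: "nat list \<Rightarrow> nat \<Rightarrow> nat list set" where
  "top_simplex lam a = {lam} \<union> {move lam c a | c. admissible lam c a}"

text \<open>The family C_n, each member recorded by its vertex set.\<close>
definition cover_family :: "nat \<Rightarrow> nat list set set" where
  "cover_family n =
     {star_simplex lam c | lam c. lam \<in> partitions n \<and> removable lam c} \<union>
     {top_simplex lam a | lam a. lam \<in> partitions n \<and> addable lam a}"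

definition full_simplex :: "'a set \<Rightarrow> 'a set set" where
  "full_simplex \<sigma> = {\<tau>. \<tau> \<noteq> {} \<and> \<tau> \<subseteq> \<sigma>}"

definition nerve :: "nat \<Rightarrow> nat list set set set" where
  "nerve n = {F. F \<noteq> {} \<and> F \<subseteq> cover_family n \<and> (\<Inter>\<sigma>\<in>F. full_simplex \<sigma>) \<noteq> {}}"

end

theory Submission
  imports Defs "HOL-Library.Multiset"
begin

text \<open>Grouping the faces of \<open>K\<^sub>n\<close> by their number of vertices gives the first equation.
  For the second, every full star- and top-simplex is a clique of \<open>G\<^sub>n\<close>, and conversely every
  clique \<open>\<tau>\<close> lies in one of them: fix \<open>u \<in> \<tau>\<close>; each other vertex of \<open>\<tau>\<close> is a transfer
  \<open>u(c \<rightarrow> a)\<close> needing no reordering, two such transfers are adjacent only if they share the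
  removed row \<open>c\<close> or the added row \<open>a\<close>, and pairs that pairwise share a coordinate all share
  the same one. So \<open>K\<^sub>n\<close> is the union of the full simplices of \<open>C\<^sub>n\<close>. Every nonempty
  intersection of full simplices is again a full simplex, of Euler characteristic 1, so counting
  the pairs (face, subfamily of the cover containing it) with signs in two ways gives
  \<open>\<chi>(K\<^sub>n) = \<chi>(N\<^sub>n)\<close>.\<close>

lemma pairwise_agreeing_imp_common_value:
  assumes agree: "\<And>x y. x \<in> S \<Longrightarrow> y \<in> S \<Longrightarrow> f x = f y \<or> g x = g y"
  shows "(\<exists>c. \<forall>x\<in>S. f x = c) \<or> (\<exists>a. \<forall>x\<in>S. g x = a)"
proof (cases "S = {}")
  case False
  then obtain x where "x \<in> S"
    by blast
  show ?thesis
  proof (rule disjCI)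
    assume "\<not> (\<exists>a. \<forall>x\<in>S. g x = a)"
    then obtain z where "z \<in> S" "g z \<noteq> g x"
      by blast
    then have "f z = f x"
      using agree[OF \<open>x \<in> S\<close> \<open>z \<in> S\<close>] by auto
    have "f y = f x" if "y \<in> S" for y
      using agree[OF \<open>x \<in> S\<close> that] agree[OF that \<open>z \<in> S\<close>] \<open>g z \<noteq> g x\<close> \<open>f z = f x\<close> by auto
    then show "\<exists>c. \<forall>x\<in>S. f x = c"
      by blast
  qed
qed simp

lemma mset_map_fun_upd:
  "distinct xs \<Longrightarrow> i \<in> set xs \<Longrightarrow> mset (map (h(i := v)) xs) = mset (map h xs) - {#h i#} + {#v#}"
proof (induction xs)
  case (Cons x xs)
  show ?case
  proof (cases "x = i")
    case True
    then have "i \<notin> set xs"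
      using Cons.prems by simp
    then have "map (h(i := v)) (x # xs) = v # map h xs"
      using True by (simp only: list.map map_fun_upd fun_upd_same not_False_eq_True)
    then show ?thesis
      unfolding \<open>map (h(i := v)) (x # xs) = v # map h xs\<close> using True by simp
  next
    case False
    then show ?thesis
      using Cons by (simp add: diff_union_single_conv)
  qed
qed simp

section \<open>Euler characteristic of a union of full simplices\<close>

lemma full_simplex_eq_empty_iff [simp]: "full_simplex A = {} \<longleftrightarrow> A = {}"
  unfolding full_simplex_def by blast

lemma INT_full_simplex: "F \<noteq> {} \<Longrightarrow> (\<Inter>\<sigma>\<in>F. full_simplex \<sigma>) = full_simplex (\<Inter>F)"
  unfolding full_simplex_def by auto

lemma sum_Pow_alternating:
  assumes "finite A" "A \<noteq> {}"
  shows "(\<Sum>B\<in>Pow A. (-1::int) ^ card B) = 0"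
proof (rule sum_alternating_cancels)
  show "card {B \<in> Pow A. even (card B)} = card {B \<in> Pow A. odd (card B)}"
    using card_subsupersets_even_odd[of A "{}"] assms by auto
qed (use assms in simp)

lemma euler_char_full_simplex:
  assumes "finite A"
  shows "euler_char (full_simplex A) = of_bool (A \<noteq> {})"
proof (cases "A = {}")
  case False
  have "euler_char (full_simplex A) = (\<Sum>B\<in>Pow A - {{}}. - ((-1::int) ^ card B))"
    unfolding euler_char_def full_simplex_def
  proof (rule sum.cong)
    show "(-1::int) ^ (card B - 1) = - ((-1) ^ card B)" if "B \<in> Pow A - {{}}" for B
      using that assms finite_subset[of B A] by (cases "card B") auto
  qed auto
  also have "\<dots> = 1"
    using sum.remove[of "Pow A" "{}" "\<lambda>B. (-1::int) ^ card B"] sum_Pow_alternating[OF assms False]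
    by (simp add: assms sum_negf)
  finally show ?thesis using False by simp
qed (simp add: euler_char_def full_simplex_def)

lemma euler_char_Union_full_simplex_eq_nerve:
  fixes C :: "'a set set"
  assumes "finite C" and finite_members: "\<And>\<sigma>. \<sigma> \<in> C \<Longrightarrow> finite \<sigma>"
  shows "euler_char (\<Union>\<sigma>\<in>C. full_simplex \<sigma>)
       = euler_char {F. F \<noteq> {} \<and> F \<subseteq> C \<and> (\<Inter>\<sigma>\<in>F. full_simplex \<sigma>) \<noteq> {}}"
proof -
  let ?K = "\<Union>\<sigma>\<in>C. full_simplex \<sigma>"
  let ?P = "full_simplex C"
  let ?sign = "\<lambda>X. (-1::int) ^ (card X - 1)"
  have "finite ?K"
    using assms by (auto simp: full_simplex_def intro: finite_subset[of _ "\<Union>\<sigma>\<in>C. Pow \<sigma>"])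
  have "finite ?P"
    using assms by (auto simp: full_simplex_def intro: finite_subset[of _ "Pow C"])
  have faces_of_family: "euler_char (full_simplex {\<sigma>\<in>C. \<tau> \<subseteq> \<sigma>}) = 1" if "\<tau> \<in> ?K" for \<tau>
    using that assms(1) by (subst euler_char_full_simplex) (auto simp: full_simplex_def)
  have families_of_face: "{\<tau>\<in>?K. \<forall>\<sigma>\<in>F. \<tau> \<subseteq> \<sigma>} = full_simplex (\<Inter>F)" if "F \<in> ?P" for F
    using that by (auto simp: full_simplex_def)
  have "euler_char ?K = (\<Sum>\<tau>\<in>?K. ?sign \<tau> * euler_char (full_simplex {\<sigma>\<in>C. \<tau> \<subseteq> \<sigma>}))"
    using faces_of_family by (simp add: euler_char_def)
  also have "\<dots> = (\<Sum>\<tau>\<in>?K. \<Sum>F\<in>{F\<in>?P. \<forall>\<sigma>\<in>F. \<tau> \<subseteq> \<sigma>}. ?sign \<tau> * ?sign F)"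
    by (auto simp: euler_char_def sum_distrib_left full_simplex_def intro!: sum.cong)
  also have "\<dots> = (\<Sum>F\<in>?P. \<Sum>\<tau>\<in>{\<tau>\<in>?K. \<forall>\<sigma>\<in>F. \<tau> \<subseteq> \<sigma>}. ?sign \<tau> * ?sign F)"
    by (rule sum.swap_restrict[OF \<open>finite ?K\<close> \<open>finite ?P\<close>])
  also have "\<dots> = (\<Sum>F\<in>?P. ?sign F * euler_char (full_simplex (\<Inter>F)))"
    unfolding euler_char_def
  proof (rule sum.cong[OF refl])
    fix F assume "F \<in> ?P"
    then show "(\<Sum>\<tau>\<in>{\<tau>\<in>?K. \<forall>\<sigma>\<in>F. \<tau> \<subseteq> \<sigma>}. ?sign \<tau> * ?sign F)
        = ?sign F * (\<Sum>\<tau>\<in>full_simplex (\<Inter>F). ?sign \<tau>)"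
      by (simp only: families_of_face sum_distrib_left mult.commute)
  qed
  also have "\<dots> = (\<Sum>F\<in>?P. if (\<Inter>\<sigma>\<in>F. full_simplex \<sigma>) \<noteq> {} then ?sign F else 0)"
  proof (rule sum.cong)
    fix F assume "F \<in> ?P"
    then have "finite (\<Inter>F)" "F \<noteq> {}"
      using finite_members by (auto simp: full_simplex_def intro: finite_subset[OF Inter_lower])
    then show "?sign F * euler_char (full_simplex (\<Inter>F))
        = (if (\<Inter>\<sigma>\<in>F. full_simplex \<sigma>) \<noteq> {} then ?sign F else 0)"
      by (simp add: euler_char_full_simplex INT_full_simplex)
  qed simp
  also have "\<dots> = euler_char {F. F \<noteq> {} \<and> F \<subseteq> C \<and> (\<Inter>\<sigma>\<in>F. full_simplex \<sigma>) \<noteq> {}}"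
    unfolding euler_char_def sum.inter_filter[OF \<open>finite ?P\<close>, symmetric]
    by (rule sum.cong) (auto simp: full_simplex_def)
  finally show ?thesis .
qed

lemma euler_char_by_card:
  assumes "finite K" and faces: "\<And>\<sigma>. \<sigma> \<in> K \<Longrightarrow> \<sigma> \<noteq> {} \<and> finite \<sigma> \<and> card \<sigma> \<le> m"
  shows "euler_char K = (\<Sum>r = 1..m. (-1) ^ (r - 1) * int (card {\<sigma>\<in>K. card \<sigma> = r}))"
proof -
  have "card ` K \<subseteq> {1..m}"
    using faces by (auto simp: Suc_le_eq card_gt_0_iff)
  then have "euler_char K = (\<Sum>r = 1..m. \<Sum>\<sigma>\<in>{\<sigma>\<in>K. card \<sigma> = r}. (-1) ^ (card \<sigma> - 1))"
    unfolding euler_char_def by (rule sum.group[OF \<open>finite K\<close> finite_atLeastAtMost, symmetric])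
  also have "\<dots> = (\<Sum>r = 1..m. (-1) ^ (r - 1) * int (card {\<sigma>\<in>K. card \<sigma> = r}))"
    by (rule sum.cong) auto
  finally show ?thesis .
qed

section \<open>Partitions as lists of parts\<close>

definition is_partition :: "nat list \<Rightarrow> bool" where
  "is_partition xs \<longleftrightarrow> sorted_wrt (\<ge>) xs \<and> (\<forall>x\<in>set xs. 0 < x)"

lemma partitions_iff: "lam \<in> partitions n \<longleftrightarrow> is_partition lam \<and> sum_list lam = n"
  unfolding partitions_def is_partition_def by auto

lemma part_0 [simp]: "part lam 0 = 0"
  by (simp add: Defs.part_def)

lemma part_beyond: "length lam < k \<Longrightarrow> part lam k = 0"
  by (simp add: Defs.part_def)

lemma part_pos_iff: "\<forall>x\<in>set lam. 0 < x \<Longrightarrow> 0 < part lam k \<longleftrightarrow> 1 \<le> k \<and> k \<le> length lam"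
  unfolding Defs.part_def by (auto dest!: nth_mem)

lemma part_antimono:
  assumes "is_partition lam" "1 \<le> k" "k \<le> l"
  shows "part lam l \<le> part lam k"
proof (cases "k < l \<and> l \<le> length lam")
  case True
  then have "k - 1 < l - 1" "l - 1 < length lam"
    using assms by auto
  then have "lam ! (l - 1) \<le> lam ! (k - 1)"
    using assms unfolding is_partition_def sorted_wrt_iff_nth_less by blast
  then show ?thesis
    using True assms by (simp add: Defs.part_def)
qed (use assms in \<open>auto simp: part_beyond\<close>)

lemma list_eq_by_parts:
  assumes "\<forall>x\<in>set xs. 0 < x" "\<forall>y\<in>set ys. 0 < y" "\<And>k. part xs k = part ys k"
  shows "xs = ys"
proof -
  have "length xs = length ys"
  proof (rule ccontr)
    let ?M = "max (length xs) (length ys)"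
    assume "length xs \<noteq> length ys"
    then have "(0 < part xs ?M) \<noteq> (0 < part ys ?M)"
      unfolding part_pos_iff[OF assms(1)] part_pos_iff[OF assms(2)] by auto
    then show False
      using assms(3) by simp
  qed
  then show ?thesis
  proof (rule nth_equalityI)
    fix i assume "i < length xs"
    then show "xs ! i = ys ! i"
      using assms(3)[of "Suc i"] \<open>length xs = length ys\<close> by (simp add: Defs.part_def)
  qed
qed

lemma sum_list_eq_sum_parts:
  assumes "length xs \<le> m"
  shows "sum_list xs = (\<Sum>k = 1..m. part xs k)"
proof -
  have "(\<Sum>k = 1..m. part xs k) = (\<Sum>k = 1..length xs. part xs k)"
    by (rule sum.mono_neutral_right) (use assms in \<open>auto simp: part_beyond\<close>)
  also have "\<dots> = (\<Sum>i<length xs. xs ! i)"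
    by (rule sum.reindex_bij_witness[of _ Suc "\<lambda>k. k - 1"]) (auto simp: Defs.part_def)
  finally show ?thesis by (simp add: sum_list_sum_nth atLeast0LessThan)
qed

lemma finite_partitions: "finite (partitions n)"
proof (rule finite_subset)
  show "partitions n \<subseteq> {xs. set xs \<subseteq> {..n} \<and> length xs \<le> n}"
  proof
    fix xs assume "xs \<in> partitions n"
    moreover have "length xs \<le> sum_list xs" if "\<forall>x\<in>set xs. 0 < x"
      using that by (induction xs) auto
    ultimately show "xs \<in> {xs. set xs \<subseteq> {..n} \<and> length xs \<le> n}"
      using member_le_sum_list[of _ xs] by (auto simp: partitions_def)
  qed
qed (rule finite_lists_length_le, simp)

definition sorted_parts :: "(nat \<Rightarrow> nat) \<Rightarrow> nat \<Rightarrow> nat list" where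
  "sorted_parts w m = rev (sort (filter (\<lambda>x. 0 < x) (map w [1..<Suc m])))"

lemma move_eq_sorted_parts:
  "move lam i j
     = sorted_parts (\<lambda>k. part lam k + (if k = j then 1 else 0) - (if k = i then 1 else 0)) (Suc (length lam))"
  by (simp add: move_def sorted_parts_def)

lemma sorted_parts_cong_mset:
  "mset (map w [1..<Suc m]) = mset (map w' [1..<Suc m]) \<Longrightarrow> sorted_parts w m = sorted_parts w' m"
  unfolding sorted_parts_def by (metis mset_filter sorted_list_of_multiset_mset)

lemma lift_Suc_antimono_le_from_1:
  fixes w :: "nat \<Rightarrow> 'a::order"
  assumes "\<And>k. 1 \<le> k \<Longrightarrow> w (Suc k) \<le> w k" "1 \<le> k" "k \<le> l"
  shows "w l \<le> w k"
  using lift_Suc_antimono_le[of "\<lambda>i. w (Suc i)" "k - 1" "l - 1"] assms by simp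

lemma antitone_support_initial_segment:
  fixes w :: "nat \<Rightarrow> nat"
  assumes antitone: "\<And>k. 1 \<le> k \<Longrightarrow> w (Suc k) \<le> w k"
    and "w 0 = 0" and vanish: "\<And>k. m < k \<Longrightarrow> w k = 0"
  obtains L where "L \<le> m" "\<And>k. 0 < w k \<longleftrightarrow> 1 \<le> k \<and> k \<le> L"
proof -
  define L where "L = Max (insert 0 {k. 0 < w k})"
  have "k \<le> m" if "0 < w k" for k
    using vanish[of k] that by (cases "m < k") auto
  then have "{k. 0 < w k} \<subseteq> {..m}"
    by auto
  then have "finite {k. 0 < w k}"
    by (rule finite_subset) simp
  have "L \<le> m"
    unfolding L_def using \<open>finite {k. 0 < w k}\<close> \<open>{k. 0 < w k} \<subseteq> {..m}\<close> by (subst Max_le_iff) auto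
  moreover have "0 < w k \<longleftrightarrow> 1 \<le> k \<and> k \<le> L" for k
  proof
    assume "0 < w k"
    then show "1 \<le> k \<and> k \<le> L"
      using \<open>w 0 = 0\<close> \<open>finite {k. 0 < w k}\<close> by (auto simp: L_def Suc_le_eq intro: gr0I)
  next
    assume k: "1 \<le> k \<and> k \<le> L"
    then have "L \<in> {k. 0 < w k}"
      using Max_in[of "insert 0 {k. 0 < w k}"] \<open>finite {k. 0 < w k}\<close> by (auto simp: L_def)
    then show "0 < w k"
      using lift_Suc_antimono_le_from_1[where w = w, OF antitone, of k L] k by simp
  qed
  ultimately show thesis
    using that by blast
qed

lemma sorted_parts_of_antitone:
  assumes antitone: "\<And>k. 1 \<le> k \<Longrightarrow> w (Suc k) \<le> w k"
    and "w 0 = 0" and "\<And>k. m < k \<Longrightarrow> w k = 0"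
  shows "is_partition (sorted_parts w m)" and "part (sorted_parts w m) = w"
proof -
  obtain L where "L \<le> m" and pos: "\<And>k. 0 < w k \<longleftrightarrow> 1 \<le> k \<and> k \<le> L"
    using antitone_support_initial_segment[of w m] assms by blast
  have zero: "w k = 0" if "L < k" for k
    using pos[of k] that by simp
  define nu where "nu = map w [1..<Suc L]"
  have "[1..<Suc m] = [1..<Suc L] @ [Suc L..<Suc m]"
    using upt_add_eq_append[of 1 "Suc L" "m - L"] \<open>L \<le> m\<close> by simp
  then have filtered: "filter (\<lambda>x. 0 < x) (map w [1..<Suc m]) = nu"
    unfolding nu_def using pos zero by (simp add: filter_empty_conv del: upt_Suc)
  have "sorted_wrt (\<ge>) nu"
    unfolding nu_def sorted_wrt_map
    by (rule sorted_wrt_mono_rel[OF _ sorted_wrt_upt])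
      (auto intro: lift_Suc_antimono_le_from_1[where w = w, OF antitone])
  then have "rev (sort nu) = nu"
    by (metis properties_for_sort mset_rev rev_rev_ident sorted_wrt_rev)
  then have sorted_parts_eq: "sorted_parts w m = nu"
    unfolding sorted_parts_def filtered .
  show "is_partition (sorted_parts w m)"
    unfolding sorted_parts_eq is_partition_def using \<open>sorted_wrt (\<ge>) nu\<close> pos
    by (auto simp: nu_def)
  show "part (sorted_parts w m) = w"
  proof
    fix k
    show "part (sorted_parts w m) k = w k"
      using pos[of k] by (auto simp: sorted_parts_eq Defs.part_def nu_def nth_append simp del: upt_Suc)
  qed
qed

lemma sorted_parts_part:
  assumes "is_partition lam" "length lam \<le> m"
  shows "sorted_parts (part lam) m = lam"
proof -
  have "part (sorted_parts (part lam) m) = part lam" "is_partition (sorted_parts (part lam) m)"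
    using sorted_parts_of_antitone[of "part lam" m] part_antimono[OF assms(1)] assms(2)
    by (auto simp: part_beyond)
  then show ?thesis
    using assms(1) by (intro list_eq_by_parts) (auto simp: is_partition_def)
qed

section \<open>Moving a cell between rows\<close>

text \<open>\<open>is_transfer lam c a nu\<close> says that \<open>nu\<close> is \<open>\<lambda>(c \<rightarrow> a)\<close> and that no reordering
  was needed; by \<open>admissible_move_iff\<close> every admissible transfer is of this form.\<close>
definition is_transfer :: "nat list \<Rightarrow> nat \<Rightarrow> nat \<Rightarrow> nat list \<Rightarrow> bool" where
  "is_transfer lam c a nu \<longleftrightarrow>
     (\<forall>k. int (part nu k) = int (part lam k) + (if k = a then 1 else 0) - (if k = c then 1 else 0))"

lemma is_transferD:
  "is_transfer lam c a nu
     \<Longrightarrow> int (part nu k) = int (part lam k) + (if k = a then 1 else 0) - (if k = c then 1 else 0)"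
  unfolding is_transfer_def by blast

lemma is_transfer_sym: "is_transfer lam c a nu \<Longrightarrow> is_transfer nu a c lam"
  unfolding is_transfer_def by auto

lemma is_transfer_same_removed: "is_transfer lam c a x \<Longrightarrow> is_transfer lam c a' y \<Longrightarrow> is_transfer x a a' y"
  unfolding is_transfer_def by auto

lemma is_transfer_same_added: "is_transfer lam c a x \<Longrightarrow> is_transfer lam c' a y \<Longrightarrow> is_transfer x c' c y"
  unfolding is_transfer_def by auto

lemma is_transfer_unique:
  assumes "is_partition x" "is_partition y" "is_transfer lam c a x" "is_transfer lam c a y"
  shows "x = y"
proof (rule list_eq_by_parts)
  show "part x k = part y k" for k
    using is_transferD[OF assms(3), of k] is_transferD[OF assms(4), of k] by simp
qed (use assms(1,2) in \<open>auto simp: is_partition_def\<close>)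

text \<open>Coordinatewise, \<open>e\<^sub>a - e\<^sub>c + e\<^sub>q - e\<^sub>p = e\<^sub>a\<^sub>' - e\<^sub>c\<^sub>'\<close>: if \<open>c \<noteq> c'\<close> and
  \<open>a \<noteq> a'\<close>, the left side can only vanish at \<open>a\<close> and \<open>c\<close> if \<open>p = a\<close> and \<open>q = c\<close>,
  and then it vanishes at \<open>a'\<close> too.\<close>
lemma is_transfer_triangle:
  assumes "is_transfer u c a v" "is_transfer u c' a' w" "is_transfer v p q w"
    and "c \<noteq> a" "c' \<noteq> a'" "p \<noteq> q"
  shows "c = c' \<or> a = a'"
proof (rule ccontr)
  assume ne: "\<not> (c = c' \<or> a = a')"
  have eq: "(if k = a' then 1 else 0) - (if k = c' then 1 else 0) - (if k = a then 1 else 0) + (if k = c then 1 else 0)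
      = (if k = q then 1 else (0::int)) - (if k = p then 1 else 0)" for k
    using is_transferD[OF assms(1), of k] is_transferD[OF assms(2), of k] is_transferD[OF assms(3), of k]
    by simp
  have "p = a" "q \<noteq> a"
    using eq[of a] ne assms(4-6) by (auto split: if_splits)
  moreover have "q = c" "c \<noteq> a'"
    using eq[of c] ne assms(4-6) \<open>p = a\<close> by (auto split: if_splits)
  ultimately show False
    using eq[of a'] ne assms(4-6) by (auto split: if_splits)
qed

lemma is_transfer_length:
  assumes "is_partition nu" "is_transfer lam c a nu" "a \<le> Suc (length lam)" "c \<le> length lam"
  shows "length nu \<le> Suc (length lam)"
proof (rule ccontr)
  assume "\<not> ?thesis"
  then have "0 < part nu (length nu)" "int (part nu (length nu)) = 0"
    using assms part_pos_iff[of nu "length nu"] is_transferD[OF assms(2), of "length nu"]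
    by (auto simp: is_partition_def part_beyond)
  then show False by simp
qed

lemma is_transfer_sum_list:
  assumes "is_partition nu" "is_transfer lam c a nu"
    and "1 \<le> a" "a \<le> Suc (length lam)" "1 \<le> c" "c \<le> length lam"
  shows "sum_list nu = sum_list lam"
proof -
  let ?S = "{1..Suc (length lam)}"
  have "int (sum_list nu) = (\<Sum>k\<in>?S. int (part nu k))"
    using sum_list_eq_sum_parts[OF is_transfer_length[OF assms(1,2,4,6)]] by simp
  also have "\<dots> = (\<Sum>k\<in>?S. int (part lam k) + (if k = a then 1 else 0) - (if k = c then 1 else 0))"
    using is_transferD[OF assms(2)] by simp
  also have "\<dots> = (\<Sum>k\<in>?S. int (part lam k))"
    using assms(3-6) by (simp add: sum.distrib sum_subtractf)
  also have "\<dots> = int (sum_list lam)"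
    using sum_list_eq_sum_parts[of lam "Suc (length lam)"] by simp
  finally show ?thesis by simp
qed

lemma mset_map_transfer:
  fixes h :: "nat \<Rightarrow> nat"
  assumes "distinct ks" "i \<in> set ks" "j \<in> set ks" "i \<noteq> j"
  shows "mset (map (\<lambda>k. h k + (if k = j then 1 else 0) - (if k = i then 1 else 0)) ks)
       = mset (map h ks) - {#h i#} + {#h i - 1#} - {#h j#} + {#h j + 1#}"
proof -
  have "(\<lambda>k. h k + (if k = j then 1 else 0) - (if k = i then 1 else 0)) = h(i := h i - 1, j := h j + 1)"
    using assms(4) by (auto simp: fun_eq_iff)
  then show ?thesis
    using mset_map_fun_upd[OF assms(1,3), of "h(i := h i - 1)" "h j + 1"]
      mset_map_fun_upd[OF assms(1,2), of h "h i - 1"] assms(4)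
    by simp
qed

lemma move_eq_if_same_parts:
  assumes "i \<noteq> j" "c \<noteq> a" "{i, j, c, a} \<subseteq> {1..Suc (length lam)}"
    and "part lam c = part lam i" "part lam a = part lam j"
  shows "move lam i j = move lam c a"
proof -
  let ?ks = "[1..<Suc (Suc (length lam))]"
  have "mset (map (\<lambda>k. part lam k + (if k = j then 1 else 0) - (if k = i then 1 else 0)) ?ks)
      = mset (map (part lam) ?ks) - {#part lam i#} + {#part lam i - 1#} - {#part lam j#} + {#part lam j + 1#}"
    by (rule mset_map_transfer) (use assms(1,3) in auto)
  also have "\<dots> = mset (map (\<lambda>k. part lam k + (if k = a then 1 else 0) - (if k = c then 1 else 0)) ?ks)"
    unfolding assms(4,5)[symmetric] by (rule mset_map_transfer[symmetric]) (use assms(2,3) in auto)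
  finally show ?thesis
    unfolding move_eq_sorted_parts by (rule sorted_parts_cong_mset)
qed

text \<open>The only way a transfer between corners fails to be admissible.\<close>
lemma move_self_if_swap:
  assumes "is_partition lam" "removable lam c" "a = Suc c" "part lam a + 1 = part lam c"
  shows "move lam c a = lam"
proof -
  let ?ks = "[1..<Suc (Suc (length lam))]"
  have c: "1 \<le> c" "c \<le> length lam"
    using assms(2) by (auto simp: removable_def)
  have "mset (map (\<lambda>k. part lam k + (if k = a then 1 else 0) - (if k = c then 1 else 0)) ?ks)
      = mset (map (part lam) ?ks) - {#part lam c#} + {#part lam c - 1#} - {#part lam a#} + {#part lam a + 1#}"
    by (rule mset_map_transfer) (use c assms(3) in auto)
  also have "\<dots> = mset (map (part lam) ?ks)"
  proof -
    have "part lam c \<in># mset (map (part lam) ?ks)"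
      using c by (auto simp del: upt_Suc)
    moreover have "part lam a = part lam c - 1"
      using assms(4) by simp
    ultimately show ?thesis
      using assms(4) by (simp only: add_mset_remove_trivial insert_DiffM add_mset_add_single[symmetric]
          add_diff_cancel_left' Suc_eq_plus1[symmetric] \<open>part lam a = part lam c - 1\<close>)
  qed
  finally have "mset (map (\<lambda>k. part lam k + (if k = a then 1 else 0) - (if k = c then 1 else 0)) ?ks)
      = mset (map (part lam) ?ks)" .
  then have "move lam c a = sorted_parts (part lam) (Suc (length lam))"
    unfolding move_eq_sorted_parts by (rule sorted_parts_cong_mset)
  then show ?thesis
    using sorted_parts_part[OF assms(1)] by simp
qed

lemma last_row_removable:
  assumes "is_partition lam" "1 \<le> i" "i \<le> length lam"
  obtains c where "removable lam c" "part lam c = part lam i"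
    and "\<And>k. 1 \<le> k \<Longrightarrow> part lam k = part lam i \<Longrightarrow> k \<le> c"
proof -
  let ?P = "\<lambda>k. 1 \<le> k \<and> part lam k = part lam i"
  define c where "c = Greatest ?P"
  have "0 < part lam i"
    using assms part_pos_iff by (auto simp: is_partition_def)
  have bounded: "k \<le> length lam" if "?P k" for k
    using that \<open>0 < part lam i\<close> part_beyond[of lam k] by (cases "k \<le> length lam") auto
  have "?P c"
    unfolding c_def by (rule GreatestI_nat[OF _ bounded]) (use assms in simp)
  have last: "k \<le> c" if "1 \<le> k" "part lam k = part lam i" for k
    unfolding c_def by (rule Greatest_le_nat[OF _ bounded]) (use that in simp)
  have "part lam (Suc c) \<noteq> part lam c"
  proof
    assume "part lam (Suc c) = part lam c"
    then have "Suc c \<le> c"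
      using last[of "Suc c"] \<open>?P c\<close> by simp
    then show False
      by simp
  qed
  then have "removable lam c"
    using \<open>?P c\<close> part_antimono[OF assms(1), of c "Suc c"] bounded by (auto simp: removable_def)
  then show thesis
    using that \<open>?P c\<close> last by blast
qed

lemma first_row_addable:
  assumes "is_partition lam" "1 \<le> j" "j \<le> Suc (length lam)"
  obtains a where "addable lam a" "part lam a = part lam j"
    and "\<And>k. 1 \<le> k \<Longrightarrow> part lam k = part lam j \<Longrightarrow> a \<le> k"
proof -
  let ?P = "\<lambda>k. 1 \<le> k \<and> part lam k = part lam j"
  define a where "a = Least ?P"
  have "?P a"
    unfolding a_def by (rule LeastI[of _ j]) (use assms in simp)
  have first: "a \<le> k" if "1 \<le> k" "part lam k = part lam j" for k
    unfolding a_def by (rule Least_le) (use that in simp)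
  have "a \<le> j"
    using first assms by simp
  have "a = 1 \<or> part lam a < part lam (a - 1)"
  proof (cases "a = 1")
    case False
    then have "1 \<le> a - 1"
      using \<open>?P a\<close> by auto
    have "part lam (a - 1) \<noteq> part lam a"
    proof
      assume "part lam (a - 1) = part lam a"
      then have "a \<le> a - 1"
        using first[of "a - 1"] \<open>1 \<le> a - 1\<close> \<open>?P a\<close> by simp
      then show False
        using \<open>1 \<le> a - 1\<close> by simp
    qed
    then show ?thesis
      using part_antimono[OF assms(1) \<open>1 \<le> a - 1\<close>, of a] by simp
  qed simp
  then have "addable lam a"
    using \<open>a \<le> j\<close> \<open>?P a\<close> assms by (auto simp: addable_def)
  then show thesis
    using that \<open>?P a\<close> first by blast
qed

lemma move_rows_eq_move_corners:
  assumes "is_partition lam" "i \<noteq> j" "1 \<le> i" "i \<le> length lam" "1 \<le> j" "j \<le> Suc (length lam)"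
  obtains c a where "removable lam c" "addable lam a" "c \<noteq> a" "move lam i j = move lam c a"
proof -
  obtain c where c: "removable lam c" "part lam c = part lam i"
    and c_last: "\<And>k. 1 \<le> k \<Longrightarrow> part lam k = part lam i \<Longrightarrow> k \<le> c"
    using last_row_removable[OF assms(1,3,4)] by blast
  obtain a where a: "addable lam a" "part lam a = part lam j"
    and a_first: "\<And>k. 1 \<le> k \<Longrightarrow> part lam k = part lam j \<Longrightarrow> a \<le> k"
    using first_row_addable[OF assms(1,5,6)] by blast
  have "c \<noteq> a"
  proof
    assume "c = a"
    then have "part lam i = part lam j"
      using c a by simp
    then show False
      using c_last[of j] c_last[of i] a_first[of i] a_first[of j] \<open>c = a\<close> assms by simp
  qed
  moreover have "move lam i j = move lam c a"
    by (rule move_eq_if_same_parts)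
      (use assms c a \<open>c \<noteq> a\<close> in \<open>auto simp: removable_def addable_def\<close>)
  ultimately show ?thesis
    using that c a by blast
qed

lemma move_is_transfer:
  assumes lam: "is_partition lam" and "removable lam c" "addable lam a" "c \<noteq> a"
    and not_swap: "\<not> (a = Suc c \<and> part lam a + 1 = part lam c)"
  shows "is_partition (move lam c a)" "is_transfer lam c a (move lam c a)"
proof -
  define w where "w = (\<lambda>k. part lam k + (if k = a then 1 else 0) - (if k = c then 1 else 0))"
  have c: "1 \<le> c" "c \<le> length lam" "part lam (Suc c) < part lam c"
    using \<open>removable lam c\<close> by (auto simp: removable_def)
  have a: "1 \<le> a" "a \<le> Suc (length lam)" "a = 1 \<or> part lam a < part lam (a - 1)"
    using \<open>addable lam a\<close> by (auto simp: addable_def)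
  have "w (Suc k) \<le> w k" if "1 \<le> k" for k
  proof -
    have "part lam (Suc k) \<le> part lam k"
      using part_antimono[OF lam that] by simp
    moreover have "part lam (Suc k) < part lam k" if "Suc k = a"
      using a(3) that \<open>1 \<le> k\<close> by auto
    ultimately show ?thesis
      using c(3) not_swap \<open>c \<noteq> a\<close> unfolding w_def by auto
  qed
  moreover have "w 0 = 0" "\<And>k. Suc (length lam) < k \<Longrightarrow> w k = 0"
    using a c by (auto simp: w_def part_beyond)
  ultimately have "is_partition (sorted_parts w (Suc (length lam)))"
    and "part (sorted_parts w (Suc (length lam))) = w"
    using sorted_parts_of_antitone[of w] by blast+
  moreover have "move lam c a = sorted_parts w (Suc (length lam))"
    by (simp add: move_eq_sorted_parts w_def)
  moreover have "int (w k) = int (part lam k) + (if k = a then 1 else 0) - (if k = c then 1 else 0)" for k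
    using c(3) \<open>c \<noteq> a\<close> by (auto simp: w_def)
  ultimately show "is_partition (move lam c a)" "is_transfer lam c a (move lam c a)"
    by (simp_all add: is_transfer_def)
qed

lemma is_transfer_imp_move:
  assumes lam: "is_partition lam" and nu: "is_partition nu"
    and transfer: "is_transfer lam c a nu" and "c \<noteq> a"
  shows "removable lam c" "addable lam a" "move lam c a = nu" "nu \<noteq> lam"
proof -
  note diff = is_transferD[OF transfer]
  have "c \<noteq> 0" "a \<noteq> 0"
    using diff[of 0] \<open>c \<noteq> a\<close> by (auto split: if_splits)
  have "int (part nu c) = int (part lam c) - 1"
    using diff[of c] \<open>c \<noteq> a\<close> by simp
  then have "1 \<le> part lam c"
    by simp
  then have "c \<le> length lam"
    using part_pos_iff[of lam c] lam by (simp add: is_partition_def)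
  have "part nu (Suc c) \<le> part nu c"
    using part_antimono[OF nu, of c "Suc c"] \<open>c \<noteq> 0\<close> by simp
  then show "removable lam c"
    using diff[of c] diff[of "Suc c"] \<open>c \<noteq> 0\<close> \<open>c \<le> length lam\<close> \<open>c \<noteq> a\<close>
    by (auto simp: removable_def split: if_splits)
  have "a \<le> Suc (length lam)"
  proof (rule ccontr)
    assume beyond: "\<not> a \<le> Suc (length lam)"
    then have "int (part nu a) = 1" "int (part nu (a - 1)) = 0"
      using diff[of a] diff[of "a - 1"] \<open>c \<noteq> a\<close> \<open>c \<le> length lam\<close> by (auto simp: part_beyond)
    moreover have "1 \<le> a - 1"
      using beyond by simp
    ultimately show False
      using part_antimono[OF nu, of "a - 1" a] by simp
  qed
  have "part lam a < part lam (a - 1)" if "a \<noteq> 1"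
  proof -
    have "1 \<le> a - 1"
      using that \<open>a \<noteq> 0\<close> by simp
    then show ?thesis
      using diff[of a] diff[of "a - 1"] part_antimono[OF nu \<open>1 \<le> a - 1\<close>, of a] \<open>c \<noteq> a\<close>
      by (auto split: if_splits)
  qed
  then show "addable lam a"
    using \<open>a \<noteq> 0\<close> \<open>a \<le> Suc (length lam)\<close> by (auto simp: addable_def)
  have "(\<lambda>k. part lam k + (if k = a then 1 else 0) - (if k = c then 1 else 0)) = part nu"
    using diff \<open>1 \<le> part lam c\<close> \<open>c \<noteq> a\<close> by (force simp: fun_eq_iff split: if_splits)
  then show "move lam c a = nu"
    using sorted_parts_part[OF nu is_transfer_length[OF nu transfer \<open>a \<le> Suc (length lam)\<close> \<open>c \<le> length lam\<close>]]
    by (simp add: move_eq_sorted_parts)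
  show "nu \<noteq> lam"
    using diff[of a] \<open>c \<noteq> a\<close> by auto
qed

lemma admissible_move_iff:
  assumes "lam \<in> partitions n"
  shows "admissible lam c a \<and> move lam c a = nu \<longleftrightarrow> c \<noteq> a \<and> nu \<in> partitions n \<and> is_transfer lam c a nu"
proof
  assume adm: "admissible lam c a \<and> move lam c a = nu"
  then have "removable lam c" "addable lam a" "c \<noteq> a" "move lam c a \<noteq> lam"
    by (auto simp: admissible_def)
  have lam: "is_partition lam" "sum_list lam = n"
    using assms by (auto simp: partitions_iff)
  then have "\<not> (a = Suc c \<and> part lam a + 1 = part lam c)"
    using move_self_if_swap \<open>removable lam c\<close> \<open>move lam c a \<noteq> lam\<close> by blast
  then have "is_partition nu" "is_transfer lam c a nu"
    using move_is_transfer[OF lam(1) \<open>removable lam c\<close> \<open>addable lam a\<close> \<open>c \<noteq> a\<close>] adm by auto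
  moreover have "sum_list nu = n"
    using is_transfer_sum_list[OF calculation] \<open>removable lam c\<close> \<open>addable lam a\<close> lam(2)
    by (auto simp: removable_def addable_def)
  ultimately show "c \<noteq> a \<and> nu \<in> partitions n \<and> is_transfer lam c a nu"
    using \<open>c \<noteq> a\<close> by (simp add: partitions_iff)
next
  assume "c \<noteq> a \<and> nu \<in> partitions n \<and> is_transfer lam c a nu"
  then show "admissible lam c a \<and> move lam c a = nu"
    using is_transfer_imp_move[of lam nu c a] assms by (auto simp: admissible_def partitions_iff)
qed

lemma pmove_iff_admissible:
  assumes "is_partition lam"
  shows "pmove lam nu \<longleftrightarrow> (\<exists>c a. admissible lam c a \<and> move lam c a = nu)"
proof
  assume "pmove lam nu"
  then obtain i j where ij: "i \<noteq> j" "1 \<le> i" "i \<le> length lam" "1 \<le> j" "j \<le> Suc (length lam)"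
    and "move lam i j = nu" "nu \<noteq> lam"
    unfolding pmove_def by auto
  then show "\<exists>c a. admissible lam c a \<and> move lam c a = nu"
    using move_rows_eq_move_corners[OF assms ij] by (metis admissible_def)
qed (auto simp: pmove_def admissible_def removable_def addable_def)

lemma padj_iff_transfer:
  assumes "lam \<in> partitions n" "nu \<in> partitions n"
  shows "padj lam nu \<longleftrightarrow> (\<exists>c a. c \<noteq> a \<and> is_transfer lam c a nu)"
  using assms pmove_iff_admissible admissible_move_iff is_transfer_sym
  unfolding padj_def partitions_iff by metis

section \<open>Cliques of the partition graph\<close>

lemma finite_clique_complex: "finite (clique_complex n)"
  by (rule finite_subset[of _ "Pow (partitions n)"]) (auto simp: clique_complex_def finite_partitions)

lemma insert_transfers_in_clique_complex:
  assumes lam: "lam \<in> partitions n" and S: "S \<subseteq> partitions n"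
    and transfers: "\<And>nu. nu \<in> S \<Longrightarrow> \<exists>c a. c \<noteq> a \<and> R c a \<and> is_transfer lam c a nu"
    and share: "\<And>c a c' a'. R c a \<Longrightarrow> R c' a' \<Longrightarrow> c = c' \<or> a = a'"
  shows "insert lam S \<in> clique_complex n"
proof -
  have lam_adj: "padj lam nu" if "nu \<in> S" for nu
  proof -
    have "nu \<in> partitions n"
      using that S by blast
    then show ?thesis
      using transfers[OF that] padj_iff_transfer[OF lam] by blast
  qed
  have adj: "padj x y" if "x \<in> S" "y \<in> S" "x \<noteq> y" for x y
  proof -
    have x: "x \<in> partitions n" and y: "y \<in> partitions n"
      using that S by auto
    obtain c a where "c \<noteq> a" "R c a" and x_transfer: "is_transfer lam c a x"
      using transfers[OF \<open>x \<in> S\<close>] by blast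
    obtain c' a' where "c' \<noteq> a'" "R c' a'" and y_transfer: "is_transfer lam c' a' y"
      using transfers[OF \<open>y \<in> S\<close>] by blast
    have "(c, a) \<noteq> (c', a')"
      using is_transfer_unique x y x_transfer y_transfer \<open>x \<noteq> y\<close> by (auto simp: partitions_iff)
    from share[OF \<open>R c a\<close> \<open>R c' a'\<close>] have "\<exists>p q. p \<noteq> q \<and> is_transfer x p q y"
    proof
      assume "c = c'"
      then have "a \<noteq> a'" "is_transfer x a a' y"
        using is_transfer_same_removed[OF x_transfer] y_transfer \<open>(c, a) \<noteq> (c', a')\<close> by auto
      then show ?thesis
        by blast
    next
      assume "a = a'"
      then have "c' \<noteq> c" "is_transfer x c' c y"
        using is_transfer_same_added[OF x_transfer] y_transfer \<open>(c, a) \<noteq> (c', a')\<close> by auto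
      then show ?thesis
        by blast
    qed
    then show ?thesis
      using padj_iff_transfer[OF x y] by blast
  qed
  have "padj x y" if "x \<in> insert lam S" "y \<in> insert lam S" "x \<noteq> y" for x y
    using that lam_adj adj unfolding padj_def by blast
  moreover have "finite (insert lam S)"
    using finite_subset[OF S finite_partitions] by simp
  ultimately show ?thesis
    using lam S unfolding clique_complex_def by blast
qed

lemma star_simplex_eq:
  assumes "lam \<in> partitions n"
  shows "star_simplex lam c = insert lam {nu \<in> partitions n. \<exists>a. c \<noteq> a \<and> is_transfer lam c a nu}"
proof -
  have "{move lam c a | a. admissible lam c a} = {nu. \<exists>a. admissible lam c a \<and> move lam c a = nu}"
    by blast
  then show ?thesis
    unfolding star_simplex_def admissible_move_iff[OF assms] by auto
qed

lemma top_simplex_eq: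
  assumes "lam \<in> partitions n"
  shows "top_simplex lam a = insert lam {nu \<in> partitions n. \<exists>c. c \<noteq> a \<and> is_transfer lam c a nu}"
proof -
  have "{move lam c a | c. admissible lam c a} = {nu. \<exists>c. admissible lam c a \<and> move lam c a = nu}"
    by blast
  then show ?thesis
    unfolding top_simplex_def admissible_move_iff[OF assms] by auto
qed

lemma cover_family_subset_clique_complex: "cover_family n \<subseteq> clique_complex n"
proof -
  have "star_simplex lam c \<in> clique_complex n" if "lam \<in> partitions n" for lam c
    unfolding star_simplex_eq[OF that]
    by (rule insert_transfers_in_clique_complex[where R = "\<lambda>c' a. c' = c", OF that]) blast+
  moreover have "top_simplex lam a \<in> clique_complex n" if "lam \<in> partitions n" for lam a
    unfolding top_simplex_eq[OF that]
    by (rule insert_transfers_in_clique_complex[where R = "\<lambda>c a'. a' = a", OF that]) blast+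
  ultimately show ?thesis
    unfolding cover_family_def by blast
qed

lemma subset_star_simplex:
  assumes "lam \<in> partitions n" "\<tau> \<subseteq> partitions n"
    and "\<And>w. w \<in> \<tau> - {lam} \<Longrightarrow> \<exists>a. c \<noteq> a \<and> is_transfer lam c a w"
  shows "\<tau> \<subseteq> star_simplex lam c"
  using assms unfolding star_simplex_eq[OF assms(1)] by blast

lemma subset_top_simplex:
  assumes "lam \<in> partitions n" "\<tau> \<subseteq> partitions n"
    and "\<And>w. w \<in> \<tau> - {lam} \<Longrightarrow> \<exists>c. c \<noteq> a \<and> is_transfer lam c a w"
  shows "\<tau> \<subseteq> top_simplex lam a"
  using assms unfolding top_simplex_eq[OF assms(1)] by blast

lemma star_simplex_in_cover_family:
  "lam \<in> partitions n \<Longrightarrow> removable lam c \<Longrightarrow> star_simplex lam c \<in> cover_family n"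
  unfolding cover_family_def by blast

lemma top_simplex_in_cover_family:
  "lam \<in> partitions n \<Longrightarrow> addable lam a \<Longrightarrow> top_simplex lam a \<in> cover_family n"
  unfolding cover_family_def by blast

lemma last_part_removable:
  assumes "is_partition lam" "lam \<noteq> []"
  shows "removable lam (length lam)"
  using assms part_pos_iff[of lam "length lam"]
  by (auto simp: removable_def is_partition_def part_beyond Suc_le_eq)

lemma clique_transfer_corners:
  assumes "\<tau> \<in> clique_complex n" "u \<in> \<tau>"
  obtains c a where "\<forall>w\<in>\<tau> - {u}. c w \<noteq> a w \<and> is_transfer u (c w) (a w) w"
    and "\<And>w w'. w \<in> \<tau> - {u} \<Longrightarrow> w' \<in> \<tau> - {u} \<Longrightarrow> c w = c w' \<or> a w = a w'"
proof -
  have "\<tau> \<subseteq> partitions n" and adj: "\<And>x y. x \<in> \<tau> \<Longrightarrow> y \<in> \<tau> \<Longrightarrow> x \<noteq> y \<Longrightarrow> padj x y"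
    using assms(1) by (auto simp: clique_complex_def)
  have "\<forall>w\<in>\<tau> - {u}. \<exists>c a. c \<noteq> a \<and> is_transfer u c a w"
  proof
    fix w assume "w \<in> \<tau> - {u}"
    then have "u \<in> partitions n" "w \<in> partitions n" "padj u w"
      using adj assms(2) \<open>\<tau> \<subseteq> partitions n\<close> by auto
    then show "\<exists>c a. c \<noteq> a \<and> is_transfer u c a w"
      using padj_iff_transfer by blast
  qed
  then obtain c where "\<forall>w\<in>\<tau> - {u}. \<exists>a. c w \<noteq> a \<and> is_transfer u (c w) a w"
    by (metis bchoice)
  then obtain a where transfer: "\<forall>w\<in>\<tau> - {u}. c w \<noteq> a w \<and> is_transfer u (c w) (a w) w"
    by (metis bchoice)
  have "c w = c w' \<or> a w = a w'" if "w \<in> \<tau> - {u}" "w' \<in> \<tau> - {u}" for w w'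
  proof (cases "w = w'")
    case False
    have "w \<in> partitions n" "w' \<in> partitions n" "padj w w'"
      using that adj False \<open>\<tau> \<subseteq> partitions n\<close> by auto
    then obtain p q where "p \<noteq> q" "is_transfer w p q w'"
      using padj_iff_transfer[of w n w'] by blast
    then show ?thesis
      using is_transfer_triangle[of u "c w" "a w" w "c w'" "a w'" w' p q] transfer that by blast
  qed simp
  with transfer show thesis
    using that by blast
qed

lemma clique_subset_cover_member:
  assumes "1 \<le> n" and "\<tau> \<in> clique_complex n"
  obtains \<sigma> where "\<sigma> \<in> cover_family n" "\<tau> \<subseteq> \<sigma>"
proof -
  have "\<tau> \<subseteq> partitions n"
    using assms(2) by (auto simp: clique_complex_def)
  obtain u where "u \<in> \<tau>"
    using assms(2) by (auto simp: clique_complex_def)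
  then have u: "u \<in> partitions n"
    using \<open>\<tau> \<subseteq> partitions n\<close> by blast
  show thesis
  proof (cases "\<tau> - {u} = {}")
    case True
    have "u \<noteq> []"
      using u \<open>1 \<le> n\<close> unfolding partitions_def by auto
    then have "removable u (length u)"
      using last_part_removable u partitions_iff by blast
    moreover have "\<tau> \<subseteq> star_simplex u (length u)"
      using subset_star_simplex[OF u \<open>\<tau> \<subseteq> partitions n\<close>] True by blast
    ultimately show thesis
      using that star_simplex_in_cover_family[OF u] by blast
  next
    case False
    then obtain v where v: "v \<in> \<tau> - {u}"
      by blast
    obtain c a where transfer: "\<forall>w\<in>\<tau> - {u}. c w \<noteq> a w \<and> is_transfer u (c w) (a w) w"
      and "\<And>w w'. w \<in> \<tau> - {u} \<Longrightarrow> w' \<in> \<tau> - {u} \<Longrightarrow> c w = c w' \<or> a w = a w'"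
      using clique_transfer_corners[OF assms(2) \<open>u \<in> \<tau>\<close>] by blast
    then have "(\<exists>c\<^sub>0. \<forall>w\<in>\<tau> - {u}. c w = c\<^sub>0) \<or> (\<exists>a\<^sub>0. \<forall>w\<in>\<tau> - {u}. a w = a\<^sub>0)"
      by (intro pairwise_agreeing_imp_common_value)
    then consider "\<forall>w\<in>\<tau> - {u}. c w = c v" | "\<forall>w\<in>\<tau> - {u}. a w = a v"
      using v by (elim disjE exE) auto
    moreover have "removable u (c v)" "addable u (a v)"
      using is_transfer_imp_move[of u v "c v" "a v"] transfer v u \<open>\<tau> \<subseteq> partitions n\<close>
      by (auto simp: partitions_iff)
    ultimately show thesis
    proof cases
      case 1
      then have "\<tau> \<subseteq> star_simplex u (c v)"
        using transfer by (intro subset_star_simplex[OF u \<open>\<tau> \<subseteq> partitions n\<close>]) metis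
      then show thesis
        using that star_simplex_in_cover_family[OF u \<open>removable u (c v)\<close>] by blast
    next
      case 2
      then have "\<tau> \<subseteq> top_simplex u (a v)"
        using transfer by (intro subset_top_simplex[OF u \<open>\<tau> \<subseteq> partitions n\<close>]) metis
      then show thesis
        using that top_simplex_in_cover_family[OF u \<open>addable u (a v)\<close>] by blast
    qed
  qed
qed

lemma clique_complex_eq_Union_full_simplex:
  assumes "1 \<le> n"
  shows "clique_complex n = (\<Union>\<sigma>\<in>cover_family n. full_simplex \<sigma>)"
proof
  show "clique_complex n \<subseteq> (\<Union>\<sigma>\<in>cover_family n. full_simplex \<sigma>)"
  proof
    fix \<tau> assume "\<tau> \<in> clique_complex n"
    moreover obtain \<sigma> where "\<sigma> \<in> cover_family n" "\<tau> \<subseteq> \<sigma>"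
      using clique_subset_cover_member[OF assms \<open>\<tau> \<in> clique_complex n\<close>] .
    ultimately show "\<tau> \<in> (\<Union>\<sigma>\<in>cover_family n. full_simplex \<sigma>)"
      unfolding full_simplex_def clique_complex_def by blast
  qed
  show "(\<Union>\<sigma>\<in>cover_family n. full_simplex \<sigma>) \<subseteq> clique_complex n"
  proof
    fix \<tau> assume "\<tau> \<in> (\<Union>\<sigma>\<in>cover_family n. full_simplex \<sigma>)"
    then obtain \<sigma> where "\<sigma> \<in> clique_complex n" "\<tau> \<noteq> {}" "\<tau> \<subseteq> \<sigma>"
      using cover_family_subset_clique_complex unfolding full_simplex_def by blast
    moreover have "finite \<tau>"
      using calculation finite_subset[of \<tau> \<sigma>] unfolding clique_complex_def by blast
    ultimately show "\<tau> \<in> clique_complex n"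
      unfolding clique_complex_def by blast
  qed
qed

lemma card_le_clique_number:
  assumes "\<sigma> \<in> clique_complex n"
  shows "card \<sigma> \<le> clique_number n"
proof -
  have "{r. clique_count r n \<noteq> 0} \<subseteq> card ` clique_complex n"
  proof
    fix r assume "r \<in> {r. clique_count r n \<noteq> 0}"
    then have "card {\<sigma>. \<sigma> \<in> clique_complex n \<and> card \<sigma> = r} \<noteq> 0"
      by (simp add: clique_count_def)
    then have "{\<sigma>. \<sigma> \<in> clique_complex n \<and> card \<sigma> = r} \<noteq> {}"
      by (metis card.empty)
    then show "r \<in> card ` clique_complex n"
      by blast
  qed
  then have "finite {r. clique_count r n \<noteq> 0}"
    using finite_clique_complex finite_surj by blast
  moreover have "clique_count (card \<sigma>) n \<noteq> 0"
    using assms finite_clique_complex by (auto simp: clique_count_def)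
  ultimately show ?thesis
    unfolding clique_number_def by simp
qed

theorem proposition3p3:
  fixes n :: nat
  assumes "1 \<le> n"
  shows "euler_char (clique_complex n)
           = (\<Sum>r = 1..clique_number n. (-1) ^ (r - 1) * int (clique_count r n))
       \<and> (\<Sum>r = 1..clique_number n. (-1) ^ (r - 1) * int (clique_count r n))
           = euler_char (nerve n)"
proof -
  have "euler_char (clique_complex n)
      = (\<Sum>r = 1..clique_number n. (-1) ^ (r - 1) * int (clique_count r n))"
    unfolding clique_count_def
    by (rule euler_char_by_card[OF finite_clique_complex])
      (auto simp: clique_complex_def card_le_clique_number)
  moreover have "finite (cover_family n)"
    using cover_family_subset_clique_complex finite_clique_complex by (rule finite_subset)
  then have "euler_char (clique_complex n) = euler_char (nerve n)"
    unfolding clique_complex_eq_Union_full_simplex[OF assms] nerve_def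
    by (rule euler_char_Union_full_simplex_eq_nerve)
      (use cover_family_subset_clique_complex in \<open>auto simp: clique_complex_def\<close>)
  ultimately show ?thesis
    by simp
qed

end
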